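(* Let $(x_t)_{t\in\Omega}$ be a continuous frame for a finite dimensional Hilbert space $H$. Then $(x_t)_{t\in\Omega}$ does phase retrieval if and only if $(x_t)_{t\in\Omega}$ does $C$-stable phase retrieval for some constant $C>0$.
   Context: $H$ is a real or complex Hilbert space. A continuous frame $(x_t)_{t\in\Omega}$ over a measure space $(\Omega,\mu)$ satisfies $A\|x\|^2\le\int_\Omega|\langle x,x_t\rangle|^2d\mu\le B\|x\|^2$ for all $x\in H$ with $B\ge A>0$; its analysis operator is $\Theta(x)=(\langle x,x_t\rangle)_{t\in\Omega}\in L_2(\Omega)$ and $|\Theta x|=(|\langle x,x_t\rangle|)_{t\in\Omega}$. The frame does phase retrieval if whenever $x,y\in H$ satisfy $|\Theta x|=|\Theta y|$ (as elements of $L_2(\Omega)$) there is a scalar $|\lambda|=1$ with $x=\lambda y$. For $C>0$ it does $C$-stable phase retrieval if $\min_{|\lambda|=1}\|x-\lambda y\|\le C\||\Theta x|-|\Theta y|\|$ for all $x,y\in H$. *)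

theory Defs
  imports "HOL-Analysis.Analysis"
begin

definition real_cont_frame ::
  "'t measure \<Rightarrow> ('t \<Rightarrow> 'a::euclidean_space) \<Rightarrow> real \<Rightarrow> real \<Rightarrow> bool" where
  "real_cont_frame M f A B \<longleftrightarrow>
     0 < A \<and> A \<le> B \<and>
     (\<forall>x. (\<lambda>t. inner x (f t)) \<in> borel_measurable M) \<and>
     (\<forall>x. ennreal (A * (norm x)^2) \<le> (\<integral>\<^sup>+ t. ennreal (\<bar>inner x (f t)\<bar>^2) \<partial>M)
        \<and> (\<integral>\<^sup>+ t. ennreal (\<bar>inner x (f t)\<bar>^2) \<partial>M) \<le> ennreal (B * (norm x)^2))"

definition real_phase_retrieval :: "'t measure \<Rightarrow> ('t \<Rightarrow> 'a::euclidean_space) \<Rightarrow> bool" where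
  "real_phase_retrieval M f \<longleftrightarrow>
     (\<forall>x y. (AE t in M. \<bar>inner x (f t)\<bar> = \<bar>inner y (f t)\<bar>)
        \<longrightarrow> (\<exists>c::real. \<bar>c\<bar> = 1 \<and> x = c *\<^sub>R y))"

text \<open>C-stable phase retrieval; both sides of the inequality are squared
 (the right-hand side is the squared L2 norm of |Theta x| - |Theta y|).\<close>
definition real_stable_phase_retrieval ::
  "'t measure \<Rightarrow> ('t \<Rightarrow> 'a::euclidean_space) \<Rightarrow> real \<Rightarrow> bool" where
  "real_stable_phase_retrieval M f C \<longleftrightarrow>
     (\<forall>x y. ennreal ((INF c\<in>{c::real. \<bar>c\<bar> = 1}. norm (x - c *\<^sub>R y))^2)
        \<le> ennreal (C^2) * (\<integral>\<^sup>+ t. ennreal ((\<bar>inner x (f t)\<bar> - \<bar>inner y (f t)\<bar>)^2) \<partial>M))"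

definition cinner :: "complex^'n \<Rightarrow> complex^'n \<Rightarrow> complex" where
  "cinner x y = (\<Sum>i\<in>UNIV. x $ i * cnj (y $ i))"

definition complex_cont_frame ::
  "'t measure \<Rightarrow> ('t \<Rightarrow> complex^'n) \<Rightarrow> real \<Rightarrow> real \<Rightarrow> bool" where
  "complex_cont_frame M f A B \<longleftrightarrow>
     0 < A \<and> A \<le> B \<and>
     (\<forall>x. (\<lambda>t. cinner x (f t)) \<in> borel_measurable M) \<and>
     (\<forall>x. ennreal (A * (norm x)^2) \<le> (\<integral>\<^sup>+ t. ennreal ((cmod (cinner x (f t)))^2) \<partial>M)
        \<and> (\<integral>\<^sup>+ t. ennreal ((cmod (cinner x (f t)))^2) \<partial>M) \<le> ennreal (B * (norm x)^2))"

definition complex_phase_retrieval :: "'t measure \<Rightarrow> ('t \<Rightarrow> complex^'n) \<Rightarrow> bool" where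
  "complex_phase_retrieval M f \<longleftrightarrow>
     (\<forall>x y. (AE t in M. cmod (cinner x (f t)) = cmod (cinner y (f t)))
        \<longrightarrow> (\<exists>c::complex. cmod c = 1 \<and> x = c *s y))"

definition complex_stable_phase_retrieval ::
  "'t measure \<Rightarrow> ('t \<Rightarrow> complex^'n) \<Rightarrow> real \<Rightarrow> bool" where
  "complex_stable_phase_retrieval M f C \<longleftrightarrow>
     (\<forall>x y. ennreal ((INF c\<in>{c::complex. cmod c = 1}. norm (x - c *s y))^2)
        \<le> ennreal (C^2) * (\<integral>\<^sup>+ t. ennreal ((cmod (cinner x (f t)) - cmod (cinner y (f t)))^2) \<partial>M))"

end

theory Submission
  imports Defs
begin

text \<open>Stability gives phase retrieval at once: if \<open>|\<Theta>x| = |\<Theta>y|\<close> almost everywhere, the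
infimum of \<open>\<parallel>x - c y\<parallel>\<close> over the compact unit circle \<open>|c| = 1\<close> vanishes and is attained.

Conversely, let \<open>\<psi>(u, v) = \<integral> (|\<langle>u + v, x\<^sub>t\<rangle>| - |\<langle>v - u, x\<^sub>t\<rangle>|)\<^sup>2\<close>. Phase retrieval makes \<open>\<psi>\<close>
nonzero on the compact set of pairs of unit vectors (in the complex case those with \<open>\<langle>u, v\<rangle>\<close>
real), and Fatou's lemma makes \<open>\<psi>\<close> lower semicontinuous, so \<open>\<psi> \<ge> \<kappa> > 0\<close> there. Given \<open>x, y\<close>,
rotate \<open>y\<close> so that \<open>\<langle>x, y\<rangle>\<close> is real and put \<open>u = x - y\<close>, \<open>v = x + y\<close>,
\<open>d = min \<parallel>u\<parallel> \<parallel>v\<parallel>\<close>. The triangle inequality and polarization give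
\<open>||s a + s' b| - |s' b - s a|| \<le> ||a + b| - |b - a||\<close> for \<open>s, s' \<in> [0, 1]\<close>,
so shrinking \<open>u, v\<close> to length \<open>d\<close> only decreases the integrand, whence
\<open>d\<^sup>2 \<kappa> \<le> \<integral> (|\<langle>2x, x\<^sub>t\<rangle>| - |\<langle>2y, x\<^sub>t\<rangle>|)\<^sup>2\<close> and \<open>C = 2 / \<surd>\<kappa>\<close> works.\<close>

lemma nn_integral_le_liminf_of_pointwise_tendsto:
  fixes \<phi> :: "'t \<Rightarrow> 'v \<Rightarrow> real"
  assumes meas: "\<And>n. (\<lambda>t. \<phi> t (z n)) \<in> borel_measurable M"
    and lim: "\<And>t. (\<lambda>n. \<phi> t (z n)) \<longlonglongrightarrow> \<phi> t l"
  shows "(\<integral>\<^sup>+ t. ennreal (\<phi> t l) \<partial>M) \<le> liminf (\<lambda>n. \<integral>\<^sup>+ t. ennreal (\<phi> t (z n)) \<partial>M)"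
proof -
  have "(\<integral>\<^sup>+ t. ennreal (\<phi> t l) \<partial>M) = (\<integral>\<^sup>+ t. liminf (\<lambda>n. ennreal (\<phi> t (z n))) \<partial>M)"
    by (intro nn_integral_cong lim_imp_Liminf[symmetric] tendsto_ennrealI lim) simp
  also have "\<dots> \<le> liminf (\<lambda>n. \<integral>\<^sup>+ t. ennreal (\<phi> t (z n)) \<partial>M)"
    by (rule nn_integral_liminf) (use meas in auto)
  finally show ?thesis .
qed

lemma compact_nn_integral_uniform_pos:
  fixes K :: "'v::metric_space set" and \<phi> :: "'t \<Rightarrow> 'v \<Rightarrow> real"
  assumes K: "compact K"
    and meas: "\<And>z. (\<lambda>t. \<phi> t z) \<in> borel_measurable M"
    and cont: "\<And>t. continuous_on K (\<phi> t)"
    and nonneg: "\<And>t z. 0 \<le> \<phi> t z"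
    and nonzero: "\<And>z. z \<in> K \<Longrightarrow> \<not> (AE t in M. \<phi> t z = 0)"
  shows "\<exists>\<kappa>>0. \<forall>z\<in>K. ennreal \<kappa> \<le> (\<integral>\<^sup>+ t. ennreal (\<phi> t z) \<partial>M)"
proof (rule ccontr)
  assume "\<not> ?thesis"
  then have "\<forall>n. \<exists>z\<in>K. (\<integral>\<^sup>+ t. ennreal (\<phi> t z) \<partial>M) < ennreal (1 / Suc n)"
    by (metis not_le of_nat_0_less_iff zero_less_Suc zero_less_divide_1_iff)
  then obtain z where zK: "\<And>n. z n \<in> K"
    and small: "\<And>n. (\<integral>\<^sup>+ t. ennreal (\<phi> t (z n)) \<partial>M) < ennreal (1 / Suc n)"
    by metis
  from K zK obtain l r where lK: "l \<in> K" and r: "strict_mono r" and lim: "(z \<circ> r) \<longlonglongrightarrow> l"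
    unfolding compact_eq_seq_compact_metric seq_compact_def by metis
  have "(\<integral>\<^sup>+ t. ennreal (\<phi> t l) \<partial>M) \<le> liminf (\<lambda>n. \<integral>\<^sup>+ t. ennreal (\<phi> t (z (r n))) \<partial>M)"
  proof (rule nn_integral_le_liminf_of_pointwise_tendsto)
    show "(\<lambda>n. \<phi> t (z (r n))) \<longlonglongrightarrow> \<phi> t l" for t
      using continuous_on_tendsto_compose[OF cont lim lK] zK by (simp add: o_def)
  qed (rule meas)
  also have "\<dots> \<le> liminf (\<lambda>n. ennreal (1 / Suc n))"
  proof (intro Liminf_mono always_eventually allI)
    fix n
    have "ennreal (1 / Suc (r n)) \<le> ennreal (1 / Suc n)"
      using strict_mono_imp_increasing[OF r, of n] by (intro ennreal_leI) (simp add: frac_le)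
    then show "(\<integral>\<^sup>+ t. ennreal (\<phi> t (z (r n))) \<partial>M) \<le> ennreal (1 / Suc n)"
      using small[of "r n"] by order
  qed
  also have "\<dots> = 0"
  proof -
    have "(\<lambda>n. ennreal (1 / Suc n)) \<longlonglongrightarrow> ennreal 0"
      by (intro tendsto_ennrealI) (rule LIMSEQ_Suc[OF lim_inverse_n'])
    then show ?thesis by (simp add: lim_imp_Liminf)
  qed
  finally have "(\<integral>\<^sup>+ t. ennreal (\<phi> t l) \<partial>M) = 0"
    by simp
  then have "AE t in M. ennreal (\<phi> t l) = 0"
    by (subst (asm) nn_integral_0_iff_AE) (use meas in auto)
  then have "AE t in M. \<phi> t l = 0"
    by eventually_elim (use nonneg in \<open>auto simp: antisym\<close>)
  with nonzero lK show False by blast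
qed

lemma compact_attains_zero_of_INF_zero:
  fixes h :: "'a::metric_space \<Rightarrow> real"
  assumes "compact S" "S \<noteq> {}" "continuous_on S h" "\<And>c. c \<in> S \<Longrightarrow> 0 \<le> h c"
    and "(INF c\<in>S. h c) = 0"
  shows "\<exists>c\<in>S. h c = 0"
proof -
  obtain c where c: "c \<in> S" "\<And>c'. c' \<in> S \<Longrightarrow> h c \<le> h c'"
    using continuous_attains_inf[OF assms(1-3)] by blast
  then have "h c \<le> (INF c\<in>S. h c)"
    by (intro cINF_greatest) (use assms(2) in auto)
  with assms(4,5) c(1) show ?thesis by force
qed

lemma norm_add_sq_minus_norm_diff_sq:
  fixes a b :: "'a::real_inner"
  shows "(norm (a + b))\<^sup>2 - (norm (b - a))\<^sup>2 = 4 * inner a b"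
  by (simp add: power2_norm_eq_inner inner_add_left inner_add_right inner_diff_left
      inner_diff_right inner_commute)

lemma scaleR_norm_add_plus_norm_diff_le:
  fixes a b :: "'a::real_normed_vector"
  assumes "0 \<le> s" "s \<le> 1"
  shows "s * (norm (a + b) + norm (b - a)) \<le> norm (s *\<^sub>R a + b) + norm (b - s *\<^sub>R a)"
proof -
  let ?p = "(1 + s) / 2" and ?q = "(1 - s) / 2"
  have "?p *\<^sub>R (s *\<^sub>R a + b) - ?q *\<^sub>R (b - s *\<^sub>R a) = ((?p + ?q) * s) *\<^sub>R a + (?p - ?q) *\<^sub>R b"
    "?p *\<^sub>R (b - s *\<^sub>R a) - ?q *\<^sub>R (s *\<^sub>R a + b) = (?p - ?q) *\<^sub>R b - ((?p + ?q) * s) *\<^sub>R a"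
    by (simp_all add: algebra_simps)
  then have eq: "s *\<^sub>R (a + b) = ?p *\<^sub>R (s *\<^sub>R a + b) - ?q *\<^sub>R (b - s *\<^sub>R a)"
    "s *\<^sub>R (b - a) = ?p *\<^sub>R (b - s *\<^sub>R a) - ?q *\<^sub>R (s *\<^sub>R a + b)"
    by (simp_all add: field_simps scaleR_add_right scaleR_diff_right)
  have "s * norm (a + b) \<le> ?p * norm (s *\<^sub>R a + b) + ?q * norm (b - s *\<^sub>R a)"
    using assms norm_triangle_ineq4[of "?p *\<^sub>R (s *\<^sub>R a + b)" "?q *\<^sub>R (b - s *\<^sub>R a)"]
    by (simp add: eq(1)[symmetric])
  moreover have "s * norm (b - a) \<le> ?p * norm (b - s *\<^sub>R a) + ?q * norm (s *\<^sub>R a + b)"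
    using assms norm_triangle_ineq4[of "?p *\<^sub>R (b - s *\<^sub>R a)" "?q *\<^sub>R (s *\<^sub>R a + b)"]
    by (simp add: eq(2)[symmetric])
  ultimately show ?thesis by (simp add: field_simps)
qed

lemma abs_norm_add_minus_norm_diff_scaleR_le:
  fixes a b :: "'a::real_inner"
  assumes s: "0 \<le> s" "s \<le> 1"
  shows "\<bar>norm (s *\<^sub>R a + b) - norm (b - s *\<^sub>R a)\<bar> \<le> \<bar>norm (a + b) - norm (b - a)\<bar>"
proof -
  define P Q Ps Qs where "P = norm (a + b)" and "Q = norm (b - a)"
    and "Ps = norm (s *\<^sub>R a + b)" and "Qs = norm (b - s *\<^sub>R a)"
  have nonneg: "0 \<le> P" "0 \<le> Q" "0 \<le> Ps" "0 \<le> Qs"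
    unfolding P_def Q_def Ps_def Qs_def by simp_all
  have abs_sq_diff: "\<bar>X\<^sup>2 - Y\<^sup>2\<bar> = \<bar>X - Y\<bar> * (X + Y)" if "0 \<le> X" "0 \<le> Y" for X Y :: real
  proof -
    have "X\<^sup>2 - Y\<^sup>2 = (X - Y) * (X + Y)" by (simp add: power2_eq_square algebra_simps)
    with that show ?thesis by (simp add: abs_mult)
  qed
  have "\<bar>Ps\<^sup>2 - Qs\<^sup>2\<bar> = s * \<bar>P\<^sup>2 - Q\<^sup>2\<bar>"
    using norm_add_sq_minus_norm_diff_sq[of a b] norm_add_sq_minus_norm_diff_sq[of "s *\<^sub>R a" b] s
    unfolding P_def Q_def Ps_def Qs_def by (simp add: abs_mult)
  then have "\<bar>Ps - Qs\<bar> * (Ps + Qs) = s * (\<bar>P - Q\<bar> * (P + Q))"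
    using nonneg by (simp add: abs_sq_diff)
  also have "\<dots> \<le> \<bar>P - Q\<bar> * (Ps + Qs)"
    using mult_left_mono[OF scaleR_norm_add_plus_norm_diff_le[OF s, of a b], of "\<bar>P - Q\<bar>"]
    unfolding P_def Q_def Ps_def Qs_def by (simp add: algebra_simps)
  finally have "\<bar>Ps - Qs\<bar> * (Ps + Qs) \<le> \<bar>P - Q\<bar> * (Ps + Qs)" .
  then have "\<bar>Ps - Qs\<bar> \<le> \<bar>P - Q\<bar>"
    using nonneg by (cases "Ps + Qs = 0") (auto simp: mult_le_cancel_right)
  then show ?thesis unfolding P_def Q_def Ps_def Qs_def .
qed

lemma norm_gap_two_scalings_le:
  fixes a b :: "'a::real_inner"
  assumes "0 \<le> s" "s \<le> 1" "0 \<le> s'" "s' \<le> 1"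
  shows "(norm (s *\<^sub>R a + s' *\<^sub>R b) - norm (s' *\<^sub>R b - s *\<^sub>R a))\<^sup>2 \<le> (norm (a + b) - norm (b - a))\<^sup>2"
proof -
  have "\<bar>norm (s *\<^sub>R a + s' *\<^sub>R b) - norm (s' *\<^sub>R b - s *\<^sub>R a)\<bar>
      \<le> \<bar>norm (s *\<^sub>R a + b) - norm (b - s *\<^sub>R a)\<bar>"
    using abs_norm_add_minus_norm_diff_scaleR_le[OF assms(3,4), of b "s *\<^sub>R a"]
    by (simp add: add.commute norm_minus_commute)
  also have "\<dots> \<le> \<bar>norm (a + b) - norm (b - a)\<bar>"
    by (rule abs_norm_add_minus_norm_diff_scaleR_le[OF assms(1,2)])
  finally show ?thesis by (simp add: abs_le_square_iff)
qed

lemma ennreal_le_div_mult: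
  assumes "0 < \<kappa>" "0 \<le> a" "0 \<le> b" "ennreal (a * \<kappa>) \<le> ennreal b * I"
  shows "ennreal a \<le> ennreal (b / \<kappa>) * I"
proof -
  have "ennreal a = ennreal (1 / \<kappa>) * ennreal (a * \<kappa>)"
    using assms(1,2) by (simp flip: ennreal_mult)
  also have "\<dots> \<le> ennreal (1 / \<kappa>) * (ennreal b * I)"
    using assms(4) by (rule mult_left_mono) simp
  also have "\<dots> = ennreal (b / \<kappa>) * I"
    using assms(1,3) by (simp add: mult.assoc[symmetric] flip: ennreal_mult)
  finally show ?thesis .
qed

lemma min_norm_sq_mult_sgn_gap_le:
  fixes T :: "'v::real_normed_vector \<Rightarrow> 'w::real_inner"
  assumes lin: "linear T"
  shows "(min (norm (x - y)) (norm (x + y)))\<^sup>2 *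
      (norm (T (sgn (x - y) + sgn (x + y))) - norm (T (sgn (x + y) - sgn (x - y))))\<^sup>2
    \<le> 4 * (norm (T x) - norm (T y))\<^sup>2"
proof (cases "x - y = 0 \<or> x + y = 0")
  case True
  then show ?thesis by auto
next
  case False
  define u v where "u = x - y" and "v = x + y"
  define d where "d = min (norm u) (norm v)"
  define s s' where "s = d / norm u" and "s' = d / norm v"
  have uv: "u \<noteq> 0" "v \<noteq> 0" using False unfolding u_def v_def by auto
  have s: "0 \<le> s" "s \<le> 1" "0 \<le> s'" "s' \<le> 1"
    using uv unfolding s_def s'_def d_def by (auto simp: field_simps)
  have d: "0 \<le> d" "d *\<^sub>R sgn u = s *\<^sub>R u" "d *\<^sub>R sgn v = s' *\<^sub>R v"
    unfolding s_def s'_def d_def by (simp_all add: sgn_div_norm divide_inverse)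
  have "d\<^sup>2 * (norm (T (sgn u + sgn v)) - norm (T (sgn v - sgn u)))\<^sup>2
      = (norm (T (d *\<^sub>R sgn u + d *\<^sub>R sgn v)) - norm (T (d *\<^sub>R sgn v - d *\<^sub>R sgn u)))\<^sup>2"
    using d(1) by (simp add: linear_scale[OF lin] power_mult_distrib[symmetric]
        right_diff_distrib flip: scaleR_add_right scaleR_diff_right)
  also have "\<dots> = (norm (s *\<^sub>R T u + s' *\<^sub>R T v) - norm (s' *\<^sub>R T v - s *\<^sub>R T u))\<^sup>2"
    by (simp only: d(2,3) linear_add[OF lin] linear_diff[OF lin] linear_scale[OF lin])
  also have "\<dots> \<le> (norm (T u + T v) - norm (T v - T u))\<^sup>2"
    by (rule norm_gap_two_scalings_le[OF s])
  also have "\<dots> = (norm (T (2 *\<^sub>R x)) - norm (T (2 *\<^sub>R y)))\<^sup>2"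
    unfolding u_def v_def by (simp add: algebra_simps scaleR_2 flip: linear_add[OF lin] linear_diff[OF lin])
  also have "\<dots> = 4 * (norm (T x) - norm (T y))\<^sup>2"
    by (simp add: linear_scale[OF lin] power2_eq_square algebra_simps)
  finally show ?thesis unfolding d_def u_def v_def .
qed

lemma min_norm_sq_le_gap_integral:
  fixes L :: "'t \<Rightarrow> 'v::real_normed_vector \<Rightarrow> 'w::real_inner"
  assumes lin: "\<And>t. linear (L t)"
    and meas: "\<And>x. (\<lambda>t. norm (L t x)) \<in> borel_measurable M"
    and \<kappa>: "0 < \<kappa>"
    and bound: "x - y \<noteq> 0 \<Longrightarrow> x + y \<noteq> 0 \<Longrightarrow> ennreal \<kappa> \<le>
      (\<integral>\<^sup>+ t. ennreal ((norm (L t (sgn (x - y) + sgn (x + y)))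
                     - norm (L t (sgn (x + y) - sgn (x - y))))\<^sup>2) \<partial>M)"
  shows "ennreal ((min (norm (x - y)) (norm (x + y)))\<^sup>2)
    \<le> ennreal ((2 / sqrt \<kappa>)\<^sup>2) * (\<integral>\<^sup>+ t. ennreal ((norm (L t x) - norm (L t y))\<^sup>2) \<partial>M)"
proof (cases "x - y = 0 \<or> x + y = 0")
  case True
  then show ?thesis by auto
next
  case False
  define d where "d = min (norm (x - y)) (norm (x + y))"
  define \<psi> where "\<psi> t = (norm (L t (sgn (x - y) + sgn (x + y)))
    - norm (L t (sgn (x + y) - sgn (x - y))))\<^sup>2" for t
  have "ennreal (d\<^sup>2 * \<kappa>) \<le> ennreal (d\<^sup>2) * (\<integral>\<^sup>+ t. ennreal (\<psi> t) \<partial>M)"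
    using bound False \<kappa> unfolding \<psi>_def by (simp add: ennreal_mult' mult_left_mono)
  also have "\<dots> = (\<integral>\<^sup>+ t. ennreal (d\<^sup>2 * \<psi> t) \<partial>M)"
    unfolding \<psi>_def
    by (subst nn_integral_cmult[symmetric]) (use meas in \<open>auto simp: ennreal_mult\<close>)
  also have "\<dots> \<le> (\<integral>\<^sup>+ t. ennreal (4 * (norm (L t x) - norm (L t y))\<^sup>2) \<partial>M)"
    using min_norm_sq_mult_sgn_gap_le[OF lin] unfolding d_def \<psi>_def
    by (intro nn_integral_mono ennreal_leI) blast
  also have "\<dots> = ennreal 4 * (\<integral>\<^sup>+ t. ennreal ((norm (L t x) - norm (L t y))\<^sup>2) \<partial>M)"
    by (subst nn_integral_cmult[symmetric]) (use meas in \<open>auto simp: ennreal_mult\<close>)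
  finally have "ennreal (d\<^sup>2) \<le> ennreal (4 / \<kappa>) *
      (\<integral>\<^sup>+ t. ennreal ((norm (L t x) - norm (L t y))\<^sup>2) \<partial>M)"
    by (intro ennreal_le_div_mult[OF \<kappa>]) auto
  with \<kappa> show ?thesis by (simp add: d_def power_divide)
qed

lemma unit_pairs_uniform_gap:
  fixes L :: "'t \<Rightarrow> 'v::euclidean_space \<Rightarrow> 'w::real_inner"
  assumes lin: "\<And>t. linear (L t)"
    and meas: "\<And>x. (\<lambda>t. norm (L t x)) \<in> borel_measurable M"
    and closed: "closed {(u, v). P u v}"
    and separating: "\<And>u v. norm u = 1 \<Longrightarrow> norm v = 1 \<Longrightarrow> P u v \<Longrightarrow>
      \<not> (AE t in M. norm (L t (u + v)) = norm (L t (v - u)))"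
  shows "\<exists>\<kappa>>0. \<forall>u v. norm u = 1 \<longrightarrow> norm v = 1 \<longrightarrow> P u v \<longrightarrow>
    ennreal \<kappa> \<le> (\<integral>\<^sup>+ t. ennreal ((norm (L t (u + v)) - norm (L t (v - u)))\<^sup>2) \<partial>M)"
proof -
  define K where "K = (sphere 0 1 \<times> sphere 0 1) \<inter> {(u, v). P u v}"
  define \<phi> where "\<phi> t z = (norm (L t (fst z + snd z)) - norm (L t (snd z - fst z)))\<^sup>2" for t z
  have "\<exists>\<kappa>>0. \<forall>z\<in>K. ennreal \<kappa> \<le> (\<integral>\<^sup>+ t. ennreal (\<phi> t z) \<partial>M)"
  proof (rule compact_nn_integral_uniform_pos)
    show "compact K"
      unfolding K_def using closed by (intro compact_Int_closed compact_Times compact_sphere)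
    show "(\<lambda>t. \<phi> t z) \<in> borel_measurable M" for z
      unfolding \<phi>_def using meas[of "fst z + snd z"] meas[of "snd z - fst z"] by measurable
    have cont_L: "continuous_on K (\<lambda>z. L t (h z))" if "continuous_on K h" for t h
      using continuous_on_compose[OF that linear_continuous_on, of "L t"] lin
      by (simp add: o_def linear_conv_bounded_linear)
    show "continuous_on K (\<phi> t)" for t
      unfolding \<phi>_def by (intro continuous_intros cont_L)
    show "0 \<le> \<phi> t z" for t z by (simp add: \<phi>_def)
    show "\<not> (AE t in M. \<phi> t z = 0)" if "z \<in> K" for z
      using separating[of "fst z" "snd z"] that unfolding K_def \<phi>_def by (auto simp: case_prod_beta)
  qed
  then obtain \<kappa> where "\<kappa> > 0"
    and bound: "\<And>z. z \<in> K \<Longrightarrow> ennreal \<kappa> \<le> (\<integral>\<^sup>+ t. ennreal (\<phi> t z) \<partial>M)"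
    by blast
  have "ennreal \<kappa> \<le> (\<integral>\<^sup>+ t. ennreal ((norm (L t (u + v)) - norm (L t (v - u)))\<^sup>2) \<partial>M)"
    if "norm u = 1" "norm v = 1" "P u v" for u v
    using bound[of "(u, v)"] that by (simp add: K_def \<phi>_def)
  with \<open>\<kappa> > 0\<close> show ?thesis by blast
qed

lemma INF_norm_le:
  fixes g :: "'k \<Rightarrow> 'v::real_normed_vector"
  shows "c \<in> S \<Longrightarrow> (INF c\<in>S. norm (g c)) \<le> norm (g c)"
  by (rule cINF_lower) (auto intro: bdd_belowI[of _ 0])

lemma INF_norm_nonneg:
  fixes g :: "'k \<Rightarrow> 'v::real_normed_vector"
  shows "S \<noteq> {} \<Longrightarrow> 0 \<le> (INF c\<in>S. norm (g c))"
  by (rule cINF_greatest) auto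

lemma stable_bound_zero_of_AE_eq:
  assumes "ennreal (D\<^sup>2) \<le> ennreal (C\<^sup>2) * (\<integral>\<^sup>+ t. ennreal ((a t - b t)\<^sup>2) \<partial>M)"
    and "AE t in M. a t = b t"
  shows "D = 0"
proof -
  have "(\<integral>\<^sup>+ t. ennreal ((a t - b t)\<^sup>2) \<partial>M) = 0"
    using assms(2) by (subst nn_integral_cong_AE[where v = "\<lambda>_. 0"]) auto
  with assms(1) show ?thesis by simp
qed

lemma real_phase_retrieval_imp_stable:
  fixes f :: "'t \<Rightarrow> 'a::euclidean_space"
  assumes meas: "\<And>x. (\<lambda>t. inner x (f t)) \<in> borel_measurable M"
    and pr: "real_phase_retrieval M f"
  shows "\<exists>C>0. real_stable_phase_retrieval M f C"
proof -
  have lin: "linear (\<lambda>a. inner a (f t))" for t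
    by (rule bounded_linear.linear[OF bounded_linear_inner_left])
  have meas_norm: "(\<lambda>t. norm (inner a (f t))) \<in> borel_measurable M" for a
    using meas[of a] by measurable
  have "\<not> (AE t in M. norm (inner (u + v) (f t)) = norm (inner (v - u) (f t)))"
    if "norm u = 1" "norm v = 1" for u v :: 'a
  proof
    assume "AE t in M. norm (inner (u + v) (f t)) = norm (inner (v - u) (f t))"
    with pr obtain c :: real where c: "\<bar>c\<bar> = 1" "u + v = c *\<^sub>R (v - u)"
      unfolding real_phase_retrieval_def by auto
    from c(1) have "c = 1 \<or> c = -1" by linarith
    then show False
    proof
      assume "c = 1"
      with c(2) have "u + u = 0" by (simp add: algebra_simps)
      with that show False by (simp flip: scaleR_2)
    next
      assume "c = -1"
      with c(2) have "v + v = 0" by (simp add: algebra_simps)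
      with that show False by (simp flip: scaleR_2)
    qed
  qed
  then obtain \<kappa> where \<kappa>: "\<kappa> > 0" and gap: "\<And>u v. norm u = 1 \<Longrightarrow> norm v = 1 \<Longrightarrow>
      ennreal \<kappa> \<le> (\<integral>\<^sup>+ t. ennreal ((norm (inner (u + v) (f t)) - norm (inner (v - u) (f t)))\<^sup>2) \<partial>M)"
    using unit_pairs_uniform_gap[where P = "\<lambda>_ _. True", OF lin meas_norm] by auto
  have "real_stable_phase_retrieval M f (2 / sqrt \<kappa>)"
    unfolding real_stable_phase_retrieval_def
  proof (intro allI)
    fix x y :: 'a
    let ?D = "INF c\<in>{c::real. \<bar>c\<bar> = 1}. norm (x - c *\<^sub>R y)"
    have "?D \<le> min (norm (x - y)) (norm (x + y))"
      using INF_norm_le[where g = "\<lambda>c. x - c *\<^sub>R y" and S = "{c. \<bar>c\<bar> = 1}", of 1]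
        INF_norm_le[where g = "\<lambda>c. x - c *\<^sub>R y" and S = "{c. \<bar>c\<bar> = 1}", of "-1"] by simp
    moreover have "0 \<le> ?D"
      by (rule INF_norm_nonneg) (use abs_one in blast)
    ultimately have "ennreal (?D\<^sup>2) \<le> ennreal ((min (norm (x - y)) (norm (x + y)))\<^sup>2)"
      by (intro ennreal_leI power_mono)
    also have "\<dots> \<le> ennreal ((2 / sqrt \<kappa>)\<^sup>2) *
        (\<integral>\<^sup>+ t. ennreal ((norm (inner x (f t)) - norm (inner y (f t)))\<^sup>2) \<partial>M)"
      by (rule min_norm_sq_le_gap_integral[OF lin meas_norm \<kappa>])
        (use gap[of "sgn (x - y)" "sgn (x + y)"] in \<open>simp add: norm_sgn\<close>)
    finally show "ennreal (?D\<^sup>2) \<le> ennreal ((2 / sqrt \<kappa>)\<^sup>2) *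
        (\<integral>\<^sup>+ t. ennreal ((\<bar>inner x (f t)\<bar> - \<bar>inner y (f t)\<bar>)\<^sup>2) \<partial>M)"
      by simp
  qed
  with \<kappa> show ?thesis by (intro exI[of _ "2 / sqrt \<kappa>"]) auto
qed

lemma real_stable_imp_phase_retrieval:
  assumes "real_stable_phase_retrieval M f C"
  shows "real_phase_retrieval M f"
  unfolding real_phase_retrieval_def
proof (intro allI impI)
  fix x y
  assume "AE t in M. \<bar>inner x (f t)\<bar> = \<bar>inner y (f t)\<bar>"
  then have "(INF c\<in>sphere 0 1. norm (x - c *\<^sub>R y)) = 0"
    using assms unfolding real_stable_phase_retrieval_def
    by (intro stable_bound_zero_of_AE_eq) (auto simp: sphere_def)
  then have "\<exists>c\<in>sphere 0 1. norm (x - c *\<^sub>R y) = 0"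
    by (intro compact_attains_zero_of_INF_zero continuous_intros) auto
  then show "\<exists>c. \<bar>c\<bar> = 1 \<and> x = c *\<^sub>R y" by auto
qed

lemma cinner_add_left: "cinner (x + y) w = cinner x w + cinner y w"
  unfolding cinner_def by (simp add: distrib_right sum.distrib)

lemma cinner_diff_left: "cinner (x - y) w = cinner x w - cinner y w"
  unfolding cinner_def by (simp add: left_diff_distrib sum_subtractf)

lemma cinner_add_right: "cinner w (x + y) = cinner w x + cinner w y"
  unfolding cinner_def by (simp add: distrib_left sum.distrib)

lemma cinner_smult_left: "cinner (c *s x) w = c * cinner x w"
  unfolding cinner_def by (simp add: sum_distrib_left mult.assoc)

lemma cinner_smult_right: "cinner x (c *s w) = cnj c * cinner x w"
  unfolding cinner_def by (simp add: sum_distrib_left algebra_simps)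

lemma cinner_scaleR_left: "cinner (r *\<^sub>R x) w = r *\<^sub>R cinner x w"
  by (simp add: cinner_def) (simp add: scaleR_conv_of_real sum_distrib_left mult.assoc)

lemma cinner_scaleR_right: "cinner x (r *\<^sub>R w) = r *\<^sub>R cinner x w"
  by (simp add: cinner_def) (simp add: scaleR_conv_of_real sum_distrib_left algebra_simps)

lemma cinner_commute: "cinner y x = cnj (cinner x y)"
  unfolding cinner_def by (simp add: mult.commute)

lemma cinner_self: "cinner x x = complex_of_real ((norm x)\<^sup>2)"
proof -
  have "(norm x)\<^sup>2 = (\<Sum>i\<in>UNIV. (cmod (x $ i))\<^sup>2)"
    unfolding norm_vec_def L2_set_def by (simp add: sum_nonneg)
  then show ?thesis
    unfolding cinner_def by (simp flip: complex_norm_square)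
qed

lemma linear_cinner_left: "linear (\<lambda>x. cinner x w)"
  by (rule linearI) (simp_all add: cinner_add_left cinner_scaleR_left)

lemma continuous_on_cinner [continuous_intros]:
  "continuous_on S f \<Longrightarrow> continuous_on S g \<Longrightarrow> continuous_on S (\<lambda>x. cinner (f x) (g x))"
  unfolding cinner_def by (intro continuous_intros)

lemma exists_unimodular_Im_cinner_eq_0: "\<exists>c. cmod c = 1 \<and> Im (cinner x (c *s y)) = 0"
proof (cases "cinner x y = 0")
  case True
  then show ?thesis by (intro exI[of _ 1]) simp
next
  case False
  have "cnj (sgn (cinner x y)) * cinner x y = complex_of_real (cmod (cinner x y))"
    using False by (simp add: sgn_eq field_simps power2_eq_square flip: complex_norm_square of_real_mult)
  with False show ?thesis
    by (intro exI[of _ "sgn (cinner x y)"]) (simp add: cinner_smult_right norm_sgn)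
qed

lemma Im_cinner_diff_add_eq_0:
  assumes "Im (cinner x y) = 0"
  shows "Im (cinner (x - y) (x + y)) = 0"
  using assms
  by (simp add: cinner_diff_left cinner_add_right cinner_self cinner_commute[of y x])

lemma add_ne_unimodular_smult_diff:
  assumes "norm u = 1" "norm v = 1" "Im (cinner u v) = 0" "cmod c = 1"
  shows "u + v \<noteq> c *s (v - u)"
proof
  assume eq: "u + v = c *s (v - u)"
  define r where "r = cinner u v"
  have r: "cnj r = r" "cinner v u = r"
    using assms(3) by (simp_all add: r_def complex_eq_iff cinner_commute[of v u])
  have units: "cinner u u = 1" "cinner v v = 1"
    using assms(1,2) by (simp_all add: cinner_self)
  have "r + 1 = c * (1 - r)" "1 + r = c * (r - 1)"
    using arg_cong[OF eq, of "\<lambda>a. cinner a v"] arg_cong[OF eq, of "\<lambda>a. cinner a u"]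
    by (simp_all add: cinner_add_left cinner_diff_left cinner_smult_left units r r_def right_diff_distrib)
  moreover have "c \<noteq> 0" using assms(4) by auto
  ultimately have "r = 1" by (auto simp: algebra_simps)
  with \<open>r + 1 = c * (1 - r)\<close> show False by simp
qed

lemma complex_phase_retrieval_imp_stable:
  fixes g :: "'s \<Rightarrow> complex^'n"
  assumes meas: "\<And>x. (\<lambda>t. cinner x (g t)) \<in> borel_measurable N"
    and pr: "complex_phase_retrieval N g"
  shows "\<exists>C>0. complex_stable_phase_retrieval N g C"
proof -
  have lin: "linear (\<lambda>a. cinner a (g t))" for t
    by (rule linear_cinner_left)
  have meas_norm: "(\<lambda>t. norm (cinner a (g t))) \<in> borel_measurable N" for a
    using meas[of a] by measurable
  have closed: "closed {(u, v :: complex^'n). Im (cinner u v) = 0}"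
    unfolding case_prod_unfold by (intro closed_Collect_eq continuous_intros)
  have "\<not> (AE t in N. norm (cinner (u + v) (g t)) = norm (cinner (v - u) (g t)))"
    if "norm u = 1" "norm v = 1" "Im (cinner u v) = 0" for u v :: "complex^'n"
  proof
    assume "AE t in N. norm (cinner (u + v) (g t)) = norm (cinner (v - u) (g t))"
    with pr obtain c where "cmod c = 1" "u + v = c *s (v - u)"
      unfolding complex_phase_retrieval_def by blast
    with add_ne_unimodular_smult_diff[OF that] show False by blast
  qed
  then obtain \<kappa> where \<kappa>: "\<kappa> > 0" and gap: "\<And>u v. norm u = 1 \<Longrightarrow> norm v = 1 \<Longrightarrow>
      Im (cinner u v) = 0 \<Longrightarrow>
      ennreal \<kappa> \<le> (\<integral>\<^sup>+ t. ennreal ((norm (cinner (u + v) (g t)) - norm (cinner (v - u) (g t)))\<^sup>2) \<partial>N)"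
    using unit_pairs_uniform_gap[OF lin meas_norm closed] by auto
  have "complex_stable_phase_retrieval N g (2 / sqrt \<kappa>)"
    unfolding complex_stable_phase_retrieval_def
  proof (intro allI)
    fix x y :: "complex^'n"
    let ?D = "INF c\<in>{c. cmod c = 1}. norm (x - c *s y)"
    \<comment> \<open>rotating \<open>y\<close> makes \<open>\<langle>x - c y, x + c y\<rangle>\<close> real, as the uniform gap requires\<close>
    obtain c where c: "cmod c = 1" "Im (cinner x (c *s y)) = 0"
      using exists_unimodular_Im_cinner_eq_0 by blast
    have "?D \<le> min (norm (x - c *s y)) (norm (x + c *s y))"
      using INF_norm_le[where g = "\<lambda>c. x - c *s y" and S = "{c. cmod c = 1}", of c]
        INF_norm_le[where g = "\<lambda>c. x - c *s y" and S = "{c. cmod c = 1}", of "-c"] c(1)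
      by (simp add: vector_smult_lneg)
    moreover have "0 \<le> ?D"
      by (rule INF_norm_nonneg) (use norm_one in blast)
    ultimately have "ennreal (?D\<^sup>2) \<le> ennreal ((min (norm (x - c *s y)) (norm (x + c *s y)))\<^sup>2)"
      by (intro ennreal_leI power_mono)
    also have "\<dots> \<le> ennreal ((2 / sqrt \<kappa>)\<^sup>2) *
        (\<integral>\<^sup>+ t. ennreal ((norm (cinner x (g t)) - norm (cinner (c *s y) (g t)))\<^sup>2) \<partial>N)"
    proof (rule min_norm_sq_le_gap_integral[OF lin meas_norm \<kappa>])
      have "Im (cinner (x - c *s y) (x + c *s y)) = 0"
        using Im_cinner_diff_add_eq_0[OF c(2)] .
      then have "Im (cinner (sgn (x - c *s y)) (sgn (x + c *s y))) = 0"
        by (simp add: sgn_div_norm cinner_scaleR_left cinner_scaleR_right)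
      then show "ennreal \<kappa> \<le> (\<integral>\<^sup>+ t. ennreal ((norm (cinner (sgn (x - c *s y) + sgn (x + c *s y)) (g t))
          - norm (cinner (sgn (x + c *s y) - sgn (x - c *s y)) (g t)))\<^sup>2) \<partial>N)"
        if "x - c *s y \<noteq> 0" "x + c *s y \<noteq> 0"
        using gap that by (simp add: norm_sgn)
    qed
    finally show "ennreal (?D\<^sup>2) \<le> ennreal ((2 / sqrt \<kappa>)\<^sup>2) *
        (\<integral>\<^sup>+ t. ennreal ((cmod (cinner x (g t)) - cmod (cinner y (g t)))\<^sup>2) \<partial>N)"
      using c(1) by (simp add: cinner_smult_left norm_mult)
  qed
  with \<kappa> show ?thesis by (intro exI[of _ "2 / sqrt \<kappa>"]) auto
qed

lemma complex_stable_imp_phase_retrieval: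
  fixes g :: "'s \<Rightarrow> complex^'n"
  assumes "complex_stable_phase_retrieval N g C"
  shows "complex_phase_retrieval N g"
  unfolding complex_phase_retrieval_def
proof (intro allI impI)
  fix x y :: "complex^'n"
  assume "AE t in N. cmod (cinner x (g t)) = cmod (cinner y (g t))"
  then have "(INF c\<in>sphere 0 1. norm (x - c *s y)) = 0"
    using assms unfolding complex_stable_phase_retrieval_def
    by (intro stable_bound_zero_of_AE_eq) (auto simp: sphere_def)
  moreover have "continuous_on (sphere 0 1) (\<lambda>c. norm (x - c *s y))"
  proof -
    have "x - c *s y = (\<chi> i. x $ i - c * y $ i)" for c
      by (simp add: vec_eq_iff)
    then show ?thesis by (simp only:) (intro continuous_intros)
  qed
  ultimately have "\<exists>c\<in>sphere 0 1. norm (x - c *s y) = 0"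
    by (intro compact_attains_zero_of_INF_zero) auto
  then show "\<exists>c. cmod c = 1 \<and> x = c *s y" by auto
qed

theorem corollary2p3:
  fixes M :: "'t measure" and f :: "'t \<Rightarrow> 'a::euclidean_space" and A B :: real
    and N :: "'s measure" and g :: "'s \<Rightarrow> complex^'n" and A' B' :: real
  shows "(real_cont_frame M f A B \<longrightarrow>
            (real_phase_retrieval M f \<longleftrightarrow> (\<exists>C>0. real_stable_phase_retrieval M f C)))
       \<and> (complex_cont_frame N g A' B' \<longrightarrow>
            (complex_phase_retrieval N g \<longleftrightarrow> (\<exists>C>0. complex_stable_phase_retrieval N g C)))"
proof (intro conjI impI)
  assume "real_cont_frame M f A B"
  then have "\<And>x. (\<lambda>t. inner x (f t)) \<in> borel_measurable M"
    by (simp add: real_cont_frame_def)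
  then show "real_phase_retrieval M f \<longleftrightarrow> (\<exists>C>0. real_stable_phase_retrieval M f C)"
    using real_phase_retrieval_imp_stable real_stable_imp_phase_retrieval by blast
next
  assume "complex_cont_frame N g A' B'"
  then have "\<And>x. (\<lambda>t. cinner x (g t)) \<in> borel_measurable N"
    by (simp add: complex_cont_frame_def)
  then show "complex_phase_retrieval N g \<longleftrightarrow> (\<exists>C>0. complex_stable_phase_retrieval N g C)"
    using complex_phase_retrieval_imp_stable complex_stable_imp_phase_retrieval by blast
qed

end
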